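(* Let $\Gamma$ be a finitely generated group with a fixed choice of generators $\bar{\epsilon}_1,\dots,\bar{\epsilon}_n$, let $\rho:\Gamma\to SL(2,\mathbb{C})$ be a representation and set $A=(A_1,\dots,A_n)=(\rho(\bar{\epsilon}_1),\dots,\rho(\bar{\epsilon}_n))$. For $1\le j,k,l\le n$ define $\sigma_{jk}(A)=\mathsf{tr}([A_j,A_k])-2$, where $[A_j,A_k]=A_jA_kA_j^{-1}A_k^{-1}$, and $\Delta_{jkl}(A)=(\mathsf{tr}(A_jA_kA_l)-\mathsf{tr}(A_lA_kA_j))^2$. Then $\rho$ is reducible if and only if $\sigma_{jk}(A)=\Delta_{jkl}(A)=0$ for every triple $1\le j,k,l\le n$.
   Context: A representation $\rho:\Gamma\to SL(2,\mathbb{C})$ is reducible if some proper nonzero subspace of $\mathbb{C}^2$ is invariant under $\rho(\Gamma)$. *)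

theory Defs
  imports "HOL-Analysis.Analysis" "HOL-Algebra.Generated_Groups"
begin

definition SL2C :: "(complex^2^2) monoid" where
  "SL2C = \<lparr> carrier = {A. det A = 1}, mult = (\<lambda>A B. A ** B), one = mat 1 \<rparr>"

definition csubspace2 :: "(complex^2) set \<Rightarrow> bool" where
  "csubspace2 V \<longleftrightarrow> 0 \<in> V \<and> (\<forall>x\<in>V. \<forall>y\<in>V. x + y \<in> V) \<and> (\<forall>c. \<forall>x\<in>V. c *s x \<in> V)"

definition reducible_rep :: "('g, 'b) monoid_scheme \<Rightarrow> ('g \<Rightarrow> complex^2^2) \<Rightarrow> bool" where
  "reducible_rep G \<rho> \<longleftrightarrow> (\<exists>V. csubspace2 V \<and> V \<noteq> {0} \<and> V \<noteq> UNIV \<and>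
      (\<forall>g\<in>carrier G. \<forall>v\<in>V. \<rho> g *v v \<in> V))"

definition commutator2 :: "complex^2^2 \<Rightarrow> complex^2^2 \<Rightarrow> complex^2^2" where
  "commutator2 X Y = X ** Y ** matrix_inv X ** matrix_inv Y"

definition sigma2 :: "complex^2^2 \<Rightarrow> complex^2^2 \<Rightarrow> complex" where
  "sigma2 X Y = trace (commutator2 X Y) - 2"

definition Delta2 :: "complex^2^2 \<Rightarrow> complex^2^2 \<Rightarrow> complex^2^2 \<Rightarrow> complex" where
  "Delta2 X Y Z = (trace (X ** Y ** Z) - trace (Z ** Y ** X))^2"

end

theory Submission
  imports Defs
begin

text \<open>
  A representation into SL(2,C) is reducible iff the images of the generators have a common
  eigenvector, i.e. a common nontrivial zero of the binary quadratic forms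
  \<open>v \<mapsto> det (v, A\<^sub>i v)\<close>. Identify \<open>a x\<^sup>2 + b x y + c y\<^sup>2\<close> with its coefficient
  triple; it vanishes at \<open>(x, y)\<close> iff the triple is orthogonal, for the bilinear dot product,
  to the Veronese point \<open>(x\<^sup>2, x y, y\<^sup>2)\<close>. Two forms with a common zero therefore have a
  cross product proportional to that Veronese point, hence lying on the conic
  \<open>w\<^sub>2\<^sup>2 = w\<^sub>1 w\<^sub>3\<close> and orthogonal to every other form vanishing there. Conversely a
  nonzero cross product on the conic is itself a Veronese point, and orthogonality to it is the
  required common zero; if all cross products vanish, all forms are proportional and any zero
  of one of them will do. For the forms of \<open>A\<^sub>j, A\<^sub>k, A\<^sub>l\<close>, \<open>\<sigma>\<^sub>j\<^sub>k\<close> is exactly the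
  conic equation evaluated at the cross product and \<open>\<Delta>\<^sub>j\<^sub>k\<^sub>l\<close> the square of the dot product.
\<close>

text \<open>\<open>(a, b, c)\<close> stands for the form \<open>a x\<^sup>2 + b x y + c y\<^sup>2\<close>, whose value at \<open>(x, y)\<close> is
  \<open>dot3c (a, b, c) (veronese x y)\<close>.\<close>

type_synonym cform = "complex \<times> complex \<times> complex"

definition dot3c :: "cform \<Rightarrow> cform \<Rightarrow> complex" where
  "dot3c = (\<lambda>(a1, a2, a3) (b1, b2, b3). a1 * b1 + a2 * b2 + a3 * b3)"

definition cross3c :: "cform \<Rightarrow> cform \<Rightarrow> cform" where
  "cross3c = (\<lambda>(a1, a2, a3) (b1, b2, b3). (a2 * b3 - a3 * b2, a3 * b1 - a1 * b3, a1 * b2 - a2 * b1))"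

definition veronese :: "complex \<Rightarrow> complex \<Rightarrow> cform" where
  "veronese x y = (x\<^sup>2, x * y, y\<^sup>2)"

definition veronese_conic :: "cform \<Rightarrow> complex" where
  "veronese_conic = (\<lambda>(w1, w2, w3). w2\<^sup>2 - w1 * w3)"

lemma dot3c_veronese: "dot3c (a1, a2, a3) (veronese x y) = a1 * x\<^sup>2 + a2 * (x * y) + a3 * y\<^sup>2"
  by (simp add: dot3c_def veronese_def)

lemma binary_form_has_zero: "\<exists>x y. (x \<noteq> 0 \<or> y \<noteq> 0) \<and> dot3c a (veronese x y) = 0"
proof -
  obtain a1 a2 a3 where a: "a = (a1, a2, a3)" by (cases a)
  show ?thesis
  proof (cases "a1 = 0")
    case True
    then show ?thesis by (intro exI[of _ 1] exI[of _ 0]) (simp add: a dot3c_veronese)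
  next
    case False
    define s where "s = csqrt (a2\<^sup>2 - 4 * a1 * a3)"
    have s2: "s\<^sup>2 = a2\<^sup>2 - 4 * a1 * a3" by (simp add: s_def)
    define x where "x = (s - a2) / (2 * a1)"
    have "4 * a1 * (a1 * x\<^sup>2 + a2 * x + a3) = (s - a2)\<^sup>2 + 2 * a2 * (s - a2) + 4 * a1 * a3"
      using False by (simp add: x_def field_simps power2_eq_square)
    also have "\<dots> = 0" using s2 by (simp add: power2_eq_square algebra_simps)
    finally have "a1 * x\<^sup>2 + a2 * x + a3 = 0" using False by simp
    then show ?thesis by (intro exI[of _ x] exI[of _ 1]) (simp add: a dot3c_veronese)
  qed
qed

lemma veronese_if_veronese_conic_eq_0:
  assumes "veronese_conic w = 0" and "w \<noteq> (0, 0, 0)"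
  shows "\<exists>x y. (x \<noteq> 0 \<or> y \<noteq> 0) \<and> w = veronese x y"
proof -
  obtain w1 w2 w3 where w: "w = (w1, w2, w3)" by (cases w)
  have conic: "w2\<^sup>2 = w1 * w3" using assms(1) by (simp add: w veronese_conic_def)
  show ?thesis
  proof (cases "w1 = 0")
    case True
    then have "w2 = 0" "w3 \<noteq> 0" using conic assms(2) by (auto simp: w)
    then show ?thesis using True by (intro exI[of _ 0] exI[of _ "csqrt w3"]) (simp add: w veronese_def)
  next
    case False
    define x where "x = csqrt w1"
    have x: "x\<^sup>2 = w1" "x \<noteq> 0" using False by (auto simp: x_def)
    then have "(w2 / x)\<^sup>2 = w3" using False conic by (simp add: power_divide)
    then show ?thesis using x by (intro exI[of _ x] exI[of _ "w2 / x"]) (simp add: w veronese_def)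
  qed
qed

lemma veronese_conic_cross3c_eq_0:
  assumes "x \<noteq> 0 \<or> y \<noteq> 0" "dot3c a (veronese x y) = 0" "dot3c b (veronese x y) = 0"
  shows "veronese_conic (cross3c a b) = 0"
proof -
  obtain a1 a2 a3 b1 b2 b3 where ab: "a = (a1, a2, a3)" "b = (b1, b2, b3)" by (cases a, cases b)
  have qa: "a1 * x\<^sup>2 + a2 * (x * y) + a3 * y\<^sup>2 = 0" and qb: "b1 * x\<^sup>2 + b2 * (x * y) + b3 * y\<^sup>2 = 0"
    using assms(2,3) by (simp_all add: ab dot3c_veronese)
  have "veronese_conic (cross3c a b) * x ^ 4 = 0" "veronese_conic (cross3c a b) * y ^ 4 = 0"
    using qa qb by (simp_all add: ab veronese_conic_def cross3c_def) algebra+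
  then show ?thesis using assms(1) by auto
qed

lemma dot3c_cross3c_eq_0:
  assumes "x \<noteq> 0 \<or> y \<noteq> 0" "dot3c a (veronese x y) = 0" "dot3c b (veronese x y) = 0"
    "dot3c c (veronese x y) = 0"
  shows "dot3c c (cross3c a b) = 0"
proof -
  obtain a1 a2 a3 b1 b2 b3 c1 c2 c3 where abc: "a = (a1, a2, a3)" "b = (b1, b2, b3)" "c = (c1, c2, c3)"
    by (cases a, cases b, cases c)
  have qa: "a1 * x\<^sup>2 + a2 * (x * y) + a3 * y\<^sup>2 = 0" and qb: "b1 * x\<^sup>2 + b2 * (x * y) + b3 * y\<^sup>2 = 0"
    and qc: "c1 * x\<^sup>2 + c2 * (x * y) + c3 * y\<^sup>2 = 0"
    using assms(2-4) by (simp_all add: abc dot3c_veronese)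
  have "dot3c c (cross3c a b) * x\<^sup>2 = 0" "dot3c c (cross3c a b) * y\<^sup>2 = 0"
    using qa qb qc by (simp_all add: abc dot3c_def cross3c_def) algebra+
  then show ?thesis using assms(1) by auto
qed

lemma dot3c_eq_0_if_cross3c_eq_0:
  assumes "a \<noteq> (0, 0, 0)" "cross3c a b = (0, 0, 0)" "dot3c a u = 0"
  shows "dot3c b u = 0"
proof -
  obtain a1 a2 a3 b1 b2 b3 u1 u2 u3 where abu: "a = (a1, a2, a3)" "b = (b1, b2, b3)" "u = (u1, u2, u3)"
    by (cases a, cases b, cases u)
  have "a2 * b3 - a3 * b2 = 0" "a3 * b1 - a1 * b3 = 0" "a1 * b2 - a2 * b1 = 0"
    and "a1 * u1 + a2 * u2 + a3 * u3 = 0"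
    using assms(2,3) by (simp_all add: abu cross3c_def dot3c_def)
  then have "a1 * dot3c b u = 0" "a2 * dot3c b u = 0" "a3 * dot3c b u = 0"
    by (simp_all add: abu dot3c_def) algebra+
  then show ?thesis using assms(1) by (auto simp: abu)
qed


lemma common_zero_iff_cross3c:
  fixes a :: "'i \<Rightarrow> cform"
  shows "(\<exists>x y. (x \<noteq> 0 \<or> y \<noteq> 0) \<and> (\<forall>i\<in>I. dot3c (a i) (veronese x y) = 0)) \<longleftrightarrow>
    (\<forall>j\<in>I. \<forall>k\<in>I. \<forall>l\<in>I. veronese_conic (cross3c (a j) (a k)) = 0 \<and>
       dot3c (a l) (cross3c (a j) (a k)) = 0)"
    (is "?zero \<longleftrightarrow> ?cross")
proof
  assume ?zero
  then obtain x y where xy: "x \<noteq> 0 \<or> y \<noteq> 0"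
    and zero: "\<And>i. i \<in> I \<Longrightarrow> dot3c (a i) (veronese x y) = 0"
    by blast
  show ?cross
    using veronese_conic_cross3c_eq_0[OF xy zero zero] dot3c_cross3c_eq_0[OF xy zero zero zero]
    by blast
next
  assume cross: ?cross
  show ?zero
  proof (cases "\<forall>i\<in>I. a i = (0, 0, 0)")
    case True
    then show ?thesis by (intro exI[of _ 1] exI[of _ 0]) (simp add: dot3c_def veronese_def)
  next
    case False
    then obtain j where j: "j \<in> I" "a j \<noteq> (0, 0, 0)" by blast
    show ?thesis
    proof (cases "\<exists>k\<in>I. cross3c (a j) (a k) \<noteq> (0, 0, 0)")
      case True
      then obtain k where k: "k \<in> I" "cross3c (a j) (a k) \<noteq> (0, 0, 0)" by blast
      moreover have "veronese_conic (cross3c (a j) (a k)) = 0" using cross j(1) k(1) by blast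
      ultimately obtain x y where xy: "x \<noteq> 0 \<or> y \<noteq> 0" "cross3c (a j) (a k) = veronese x y"
        using veronese_if_veronese_conic_eq_0 by blast
      have "dot3c (a i) (veronese x y) = 0" if "i \<in> I" for i
      proof -
        have "dot3c (a i) (cross3c (a j) (a k)) = 0" using cross j(1) k(1) that by blast
        then show ?thesis unfolding xy(2) .
      qed
      then show ?thesis using xy(1) by blast
    next
      case False
      obtain x y where xy: "x \<noteq> 0 \<or> y \<noteq> 0" "dot3c (a j) (veronese x y) = 0"
        using binary_form_has_zero by blast
      have "dot3c (a k) (veronese x y) = 0" if "k \<in> I" for k
        using dot3c_eq_0_if_cross3c_eq_0[OF j(2) _ xy(2)] False that by blast
      then show ?thesis using xy(1) by blast
    qed
  qed
qed

lemma matrix_mult_2_nth: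
  "((A :: 'a::comm_ring_1^2^2) ** B) $ i $ j = A$i$1 * B$1$j + A$i$2 * B$2$j"
  by (simp add: matrix_matrix_mult_def sum_2)

lemma trace_2: "trace (A :: 'a::comm_ring_1^2^2) = A$1$1 + A$2$2"
  by (simp add: trace_def sum_2)

lemma matrix_2_eq_iff:
  "(A :: 'a^2^2) = B \<longleftrightarrow> A$1$1 = B$1$1 \<and> A$1$2 = B$1$2 \<and> A$2$1 = B$2$1 \<and> A$2$2 = B$2$2"
  by (auto simp: vec_eq_iff forall_2)

lemma mat_1_2_nth [simp]:
  "(mat 1 :: 'a::zero_neq_one^2^2) $ 1 $ 1 = 1" "(mat 1 :: 'a^2^2) $ 2 $ 2 = 1"
  "(mat 1 :: 'a^2^2) $ 1 $ 2 = 0" "(mat 1 :: 'a^2^2) $ 2 $ 1 = 0"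
  by (simp_all add: mat_def)

definition adjugate2 :: "'a::comm_ring_1^2^2 \<Rightarrow> 'a^2^2" where
  "adjugate2 M = vector [vector [M$2$2, - M$1$2], vector [- M$2$1, M$1$1]]"

lemma adjugate2_nth [simp]:
  "adjugate2 M $ 1 $ 1 = M$2$2" "adjugate2 M $ 1 $ 2 = - M$1$2"
  "adjugate2 M $ 2 $ 1 = - M$2$1" "adjugate2 M $ 2 $ 2 = M$1$1"
  by (simp_all add: adjugate2_def)

lemma det_adjugate2 [simp]: "det (adjugate2 M) = det M"
  by (simp add: det_2 mult.commute)

lemma adjugate2_inverse:
  assumes "det M = 1"
  shows "M ** adjugate2 M = mat 1" "adjugate2 M ** M = mat 1"
  using assms by (auto simp: matrix_2_eq_iff matrix_mult_2_nth det_2 algebra_simps)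

lemma matrix_inv_eq_adjugate2:
  assumes "det M = 1"
  shows "matrix_inv M = adjugate2 M"
proof -
  have "M ** matrix_inv M = mat 1 \<and> matrix_inv M ** M = mat 1"
    unfolding matrix_inv_def by (rule someI_ex) (use adjugate2_inverse[OF assms] in blast)
  then have "matrix_inv M = matrix_inv M ** (M ** adjugate2 M)"
    using adjugate2_inverse[OF assms] by simp
  also have "\<dots> = (matrix_inv M ** M) ** adjugate2 M"
    by (simp add: matrix_mul_assoc)
  also have "\<dots> = adjugate2 M"
    using \<open>M ** matrix_inv M = mat 1 \<and> matrix_inv M ** M = mat 1\<close> by simp
  finally show ?thesis .
qed

lemma group_SL2C: "group SL2C"
proof (rule groupI)
  fix M assume "M \<in> carrier SL2C"
  then show "\<exists>N\<in>carrier SL2C. N \<otimes>\<^bsub>SL2C\<^esub> M = \<one>\<^bsub>SL2C\<^esub>"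
    by (intro bexI[of _ "adjugate2 M"]) (auto simp: SL2C_def adjugate2_inverse)
qed (auto simp: SL2C_def det_mul matrix_mul_assoc)

text \<open>Coefficients of the form \<open>v \<mapsto> det (v, M v)\<close>, whose nonzero zeros are the eigenvectors
  of \<open>M\<close>.\<close>

definition eigenform2 :: "complex^2^2 \<Rightarrow> cform" where
  "eigenform2 M = (M$2$1, M$2$2 - M$1$1, - M$1$2)"

definition wedge2 :: "'a::comm_ring_1^2 \<Rightarrow> 'a^2 \<Rightarrow> 'a" where
  "wedge2 v w = v$1 * w$2 - v$2 * w$1"

lemma vec_2_neq_0_iff: "(v :: 'a::zero^2) \<noteq> 0 \<longleftrightarrow> v$1 \<noteq> 0 \<or> v$2 \<noteq> 0"
  by (auto simp: vec_eq_iff forall_2)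

lemma wedge2_smult_smult: "wedge2 (a *s v) (b *s v) = 0"
  by (simp add: wedge2_def algebra_simps)

lemma wedge2_eq_0_iff:
  fixes v w :: "'a::field^2"
  assumes "v \<noteq> 0"
  shows "wedge2 v w = 0 \<longleftrightarrow> (\<exists>c. w = c *s v)"
proof
  assume wedge: "wedge2 v w = 0"
  consider "v$1 \<noteq> 0" | "v$2 \<noteq> 0" using assms vec_2_neq_0_iff by blast
  then show "\<exists>c. w = c *s v"
  proof cases
    case 1
    then have "w = (w$1 / v$1) *s v"
      using wedge by (auto simp: vec_eq_iff forall_2 wedge2_def field_simps)
    then show ?thesis by blast
  next
    case 2
    then have "w = (w$2 / v$2) *s v"
      using wedge by (auto simp: vec_eq_iff forall_2 wedge2_def field_simps)
    then show ?thesis by blast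
  qed
qed (auto simp: wedge2_def)

lemma wedge2_matrix_vector_mult:
  "wedge2 v (M *v v) = dot3c (eigenform2 M) (veronese (v$1) (v$2))"
  by (simp add: wedge2_def eigenform2_def dot3c_veronese matrix_vector_mult_def sum_2
      power2_eq_square algebra_simps)

lemma eigenvector_iff_eigenform2:
  assumes "v \<noteq> 0"
  shows "(\<exists>c. M *v v = c *s v) \<longleftrightarrow> dot3c (eigenform2 M) (veronese (v$1) (v$2)) = 0"
  using wedge2_eq_0_iff[OF assms] wedge2_matrix_vector_mult by metis

lemma sigma2_eq_veronese_conic:
  assumes "det A = 1" "det B = 1"
  shows "sigma2 A B = veronese_conic (cross3c (eigenform2 A) (eigenform2 B))"
proof -
  \<comment> \<open>writing \<open>2\<close> as \<open>2 det A det B\<close> turns the claim into a polynomial identity\<close>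
  have "sigma2 A B = trace (A ** B ** adjugate2 A ** adjugate2 B) - 2 * det A * det B"
    using assms by (simp add: sigma2_def commutator2_def matrix_inv_eq_adjugate2)
  also have "\<dots> = veronese_conic (cross3c (eigenform2 A) (eigenform2 B))"
    by (simp add: trace_2 matrix_mult_2_nth det_2 eigenform2_def cross3c_def veronese_conic_def)
      algebra
  finally show ?thesis .
qed

lemma Delta2_eq_dot3c_cross3c:
  "Delta2 A B C = (dot3c (eigenform2 C) (cross3c (eigenform2 A) (eigenform2 B)))\<^sup>2"
  unfolding Delta2_def
  by (simp add: trace_2 matrix_mult_2_nth eigenform2_def cross3c_def dot3c_def) algebra

lemma common_eigenvector_iff_sigma2_Delta2:
  fixes A :: "'i \<Rightarrow> complex^2^2"
  assumes "\<forall>i\<in>I. det (A i) = 1"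
  shows "(\<exists>v. v \<noteq> 0 \<and> (\<forall>i\<in>I. \<exists>c. A i *v v = c *s v)) \<longleftrightarrow>
    (\<forall>j\<in>I. \<forall>k\<in>I. \<forall>l\<in>I. sigma2 (A j) (A k) = 0 \<and> Delta2 (A j) (A k) (A l) = 0)"
proof -
  have "(\<exists>v. v \<noteq> 0 \<and> (\<forall>i\<in>I. \<exists>c. A i *v v = c *s v)) \<longleftrightarrow>
      (\<exists>x y. (x \<noteq> 0 \<or> y \<noteq> 0) \<and> (\<forall>i\<in>I. dot3c (eigenform2 (A i)) (veronese x y) = 0))"
  proof
    assume "\<exists>v. v \<noteq> 0 \<and> (\<forall>i\<in>I. \<exists>c. A i *v v = c *s v)"
    then show "\<exists>x y. (x \<noteq> 0 \<or> y \<noteq> 0) \<and> (\<forall>i\<in>I. dot3c (eigenform2 (A i)) (veronese x y) = 0)"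
      using eigenvector_iff_eigenform2 vec_2_neq_0_iff by metis
  next
    assume "\<exists>x y. (x \<noteq> 0 \<or> y \<noteq> 0) \<and> (\<forall>i\<in>I. dot3c (eigenform2 (A i)) (veronese x y) = 0)"
    then obtain x y where "x \<noteq> 0 \<or> y \<noteq> 0" "\<forall>i\<in>I. dot3c (eigenform2 (A i)) (veronese x y) = 0"
      by blast
    then show "\<exists>v. v \<noteq> 0 \<and> (\<forall>i\<in>I. \<exists>c. A i *v v = c *s v)"
      using eigenvector_iff_eigenform2[of "vector [x, y]"]
      by (intro exI[of _ "vector [x, y]"]) (auto simp: vec_2_neq_0_iff)
  qed
  also have "\<dots> \<longleftrightarrow> (\<forall>j\<in>I. \<forall>k\<in>I. \<forall>l\<in>I.
      veronese_conic (cross3c (eigenform2 (A j)) (eigenform2 (A k))) = 0 \<and>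
      dot3c (eigenform2 (A l)) (cross3c (eigenform2 (A j)) (eigenform2 (A k))) = 0)"
    by (rule common_zero_iff_cross3c)
  also have "\<dots> \<longleftrightarrow>
      (\<forall>j\<in>I. \<forall>k\<in>I. \<forall>l\<in>I. sigma2 (A j) (A k) = 0 \<and> Delta2 (A j) (A k) (A l) = 0)"
    using assms by (simp add: sigma2_eq_veronese_conic Delta2_eq_dot3c_cross3c)
  finally show ?thesis .
qed

lemma csubspace2_eq_UNIV_if_wedge2_neq_0:
  assumes "csubspace2 V" "v \<in> V" "w \<in> V" "wedge2 v w \<noteq> 0"
  shows "V = UNIV"
proof -
  have add: "\<And>x y. x \<in> V \<Longrightarrow> y \<in> V \<Longrightarrow> x + y \<in> V"
    and smult: "\<And>c x. x \<in> V \<Longrightarrow> c *s x \<in> V"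
    using assms(1) unfolding csubspace2_def by blast+
  have "z \<in> V" for z
  proof -
    have "z = inverse (wedge2 v w) *s (wedge2 v w *s z)"
      using assms(4) by simp
    also have "wedge2 v w *s z = wedge2 z w *s v + wedge2 v z *s w"
      by (simp add: vec_eq_iff forall_2 wedge2_def algebra_simps)
    finally have z: "z = inverse (wedge2 v w) *s (wedge2 z w *s v + wedge2 v z *s w)" .
    show ?thesis
      by (subst z) (intro smult add assms(2,3))
  qed
  then show ?thesis by blast
qed

lemma csubspace2_range_smult: "csubspace2 (range (\<lambda>c. c *s v))"
  unfolding csubspace2_def
proof (intro conjI ballI allI)
  show "0 \<in> range (\<lambda>c. c *s v)"
    by (rule range_eqI[of _ _ 0]) simp
next
  fix x y assume "x \<in> range (\<lambda>c. c *s v)" "y \<in> range (\<lambda>c. c *s v)"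
  then obtain a b where "x = a *s v" "y = b *s v" by blast
  then show "x + y \<in> range (\<lambda>c. c *s v)"
    by (intro range_eqI[of _ _ "a + b"]) (simp add: vector_sadd_rdistrib)
next
  fix c x assume "x \<in> range (\<lambda>c. c *s v)"
  then obtain a where "x = a *s v" by blast
  then show "c *s x \<in> range (\<lambda>c. c *s v)"
    by (intro range_eqI[of _ _ "c * a"]) simp
qed

lemma range_smult_neq_UNIV: "range (\<lambda>c. c *s v) \<noteq> (UNIV :: ('a::field^2) set)"
proof
  assume span: "range (\<lambda>c. c *s v) = (UNIV :: ('a^2) set)"
  have "vector [1, 0] \<in> range (\<lambda>c. c *s v)" "vector [0, 1] \<in> range (\<lambda>c. c *s v)"
    unfolding span by simp_all
  then obtain a b where "vector [1, 0] = a *s v" "vector [0, 1] = b *s v"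
    by blast
  then have "wedge2 (vector [1, 0]) (vector [0, 1] :: 'a^2) = 0"
    by (simp add: wedge2_smult_smult)
  then show False by (simp add: wedge2_def)
qed

lemma reducible_rep_iff_common_eigenvector:
  "reducible_rep G \<rho> \<longleftrightarrow> (\<exists>v. v \<noteq> 0 \<and> (\<forall>g\<in>carrier G. \<exists>c. \<rho> g *v v = c *s v))"
proof
  assume "reducible_rep G \<rho>"
  then obtain V where V: "csubspace2 V" "V \<noteq> {0}" "V \<noteq> UNIV"
    and invariant: "\<forall>g\<in>carrier G. \<forall>v\<in>V. \<rho> g *v v \<in> V"
    unfolding reducible_rep_def by blast
  obtain v where v: "v \<in> V" "v \<noteq> 0" using V(1,2) unfolding csubspace2_def by blast
  have "\<exists>c. \<rho> g *v v = c *s v" if "g \<in> carrier G" for g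
  proof -
    have "\<rho> g *v v \<in> V" using invariant v(1) that by blast
    then have "wedge2 v (\<rho> g *v v) = 0"
      using csubspace2_eq_UNIV_if_wedge2_neq_0[OF V(1) v(1)] V(3) by blast
    then show ?thesis using wedge2_eq_0_iff[OF v(2)] by blast
  qed
  then show "\<exists>v. v \<noteq> 0 \<and> (\<forall>g\<in>carrier G. \<exists>c. \<rho> g *v v = c *s v)"
    using v(2) by blast
next
  assume "\<exists>v. v \<noteq> 0 \<and> (\<forall>g\<in>carrier G. \<exists>c. \<rho> g *v v = c *s v)"
  then obtain v where v: "v \<noteq> 0" and eigen: "\<forall>g\<in>carrier G. \<exists>c. \<rho> g *v v = c *s v"
    by blast
  show "reducible_rep G \<rho>"
    unfolding reducible_rep_def
  proof (intro exI[of _ "range (\<lambda>c. c *s v)"] conjI ballI)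
    show "csubspace2 (range (\<lambda>c. c *s v))" by (rule csubspace2_range_smult)
    show "range (\<lambda>c. c *s v) \<noteq> {0}"
      using v by (metis rangeI singletonD vector_smult_lid)
    show "range (\<lambda>c. c *s v) \<noteq> UNIV" by (rule range_smult_neq_UNIV)
  next
    fix g w assume g: "g \<in> carrier G" and "w \<in> range (\<lambda>c. c *s v)"
    then obtain a where w: "w = a *s v" by blast
    obtain c where "\<rho> g *v v = c *s v" using eigen g by blast
    then have "\<rho> g *v w = (a * c) *s v" by (simp add: w vector_scalar_commute)
    then show "\<rho> g *v w \<in> range (\<lambda>c. c *s v)" by blast
  qed
qed

lemma common_eigenvector_generate:
  fixes G (structure)
  assumes "group G" "\<rho> \<in> hom G SL2C" "S \<subseteq> carrier G" "v \<noteq> 0"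
    and eigen: "\<forall>s\<in>S. \<exists>c. \<rho> s *v v = c *s v"
  shows "\<forall>g\<in>generate G S. \<exists>c. \<rho> g *v v = c *s v"
proof
  interpret group_hom G SL2C \<rho>
    using assms(1,2) group_SL2C by (simp add: group_hom_def group_hom_axioms_def)
  fix g assume "g \<in> generate G S"
  then show "\<exists>c. \<rho> g *v v = c *s v"
  proof (induction rule: generate.induct)
    case one
    show ?case by (intro exI[of _ 1]) (simp add: SL2C_def)
  next
    case (incl h)
    then show ?case using eigen by blast
  next
    case (inv h)
    obtain c where c: "\<rho> h *v v = c *s v" using eigen inv by blast
    have h: "h \<in> carrier G" using inv assms(3) by blast
    have "\<rho> (inv h) \<otimes>\<^bsub>SL2C\<^esub> \<rho> h = \<rho> (inv h \<otimes> h)"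
      using h by simp
    also have "\<dots> = \<one>\<^bsub>SL2C\<^esub>"
      using h by simp
    finally have "v = \<rho> (inv h) *v (\<rho> h *v v)"
      by (simp add: SL2C_def matrix_vector_mul_assoc)
    also have "\<dots> = c *s (\<rho> (inv h) *v v)"
      by (simp add: c vector_scalar_commute)
    finally have v: "v = c *s (\<rho> (inv h) *v v)" .
    then have "c \<noteq> 0" using assms(4) by auto
    then have "\<rho> (inv h) *v v = inverse c *s v" by (subst v) simp
    then show ?case by blast
  next
    case (eng h1 h2)
    then have "h1 \<in> carrier G" "h2 \<in> carrier G"
      using group.generate_incl[OF assms(1,3)] by auto
    then have "\<rho> (h1 \<otimes>\<^bsub>G\<^esub> h2) = \<rho> h1 ** \<rho> h2" by (simp add: SL2C_def)
    moreover obtain a b where "\<rho> h1 *v v = a *s v" "\<rho> h2 *v v = b *s v" using eng.IH by blast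
    ultimately have "\<rho> (h1 \<otimes>\<^bsub>G\<^esub> h2) *v v = (b * a) *s v"
      by (simp add: matrix_vector_mul_assoc[symmetric] vector_scalar_commute)
    then show ?case by blast
  qed
qed

lemma reducible_rep_iff_generators_common_eigenvector:
  assumes "group G" "S \<subseteq> carrier G" "carrier G = generate G S" "\<rho> \<in> hom G SL2C"
  shows "reducible_rep G \<rho> \<longleftrightarrow> (\<exists>v. v \<noteq> 0 \<and> (\<forall>s\<in>S. \<exists>c. \<rho> s *v v = c *s v))"
  unfolding reducible_rep_iff_common_eigenvector
proof
  assume "\<exists>v. v \<noteq> 0 \<and> (\<forall>g\<in>carrier G. \<exists>c. \<rho> g *v v = c *s v)"
  then show "\<exists>v. v \<noteq> 0 \<and> (\<forall>s\<in>S. \<exists>c. \<rho> s *v v = c *s v)"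
    using assms(2) by blast
next
  assume "\<exists>v. v \<noteq> 0 \<and> (\<forall>s\<in>S. \<exists>c. \<rho> s *v v = c *s v)"
  then obtain v where "v \<noteq> 0" "\<forall>s\<in>S. \<exists>c. \<rho> s *v v = c *s v" by blast
  then show "\<exists>v. v \<noteq> 0 \<and> (\<forall>g\<in>carrier G. \<exists>c. \<rho> g *v v = c *s v)"
    using common_eigenvector_generate[OF assms(1,4,2)] assms(3) by blast
qed

theorem theorem1p2:
  fixes G :: "('g, 'b) monoid_scheme" and eps :: "nat \<Rightarrow> 'g" and n :: nat
    and \<rho> :: "'g \<Rightarrow> complex^2^2"
  assumes "group G"
    and "eps ` {1..n} \<subseteq> carrier G"
    and "carrier G = generate G (eps ` {1..n})"
    and "\<rho> \<in> hom G SL2C"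
  shows "reducible_rep G \<rho> \<longleftrightarrow>
    (\<forall>j\<in>{1..n}. \<forall>k\<in>{1..n}. \<forall>l\<in>{1..n}.
       sigma2 (\<rho> (eps j)) (\<rho> (eps k)) = 0 \<and>
       Delta2 (\<rho> (eps j)) (\<rho> (eps k)) (\<rho> (eps l)) = 0)"
proof -
  have "reducible_rep G \<rho> \<longleftrightarrow>
      (\<exists>v. v \<noteq> 0 \<and> (\<forall>s\<in>eps ` {1..n}. \<exists>c. \<rho> s *v v = c *s v))"
    by (rule reducible_rep_iff_generators_common_eigenvector[OF assms])
  also have "\<dots> \<longleftrightarrow> (\<exists>v. v \<noteq> 0 \<and> (\<forall>i\<in>{1..n}. \<exists>c. \<rho> (eps i) *v v = c *s v))"
    by simp
  also have "\<dots> \<longleftrightarrow> (\<forall>j\<in>{1..n}. \<forall>k\<in>{1..n}. \<forall>l\<in>{1..n}.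
      sigma2 (\<rho> (eps j)) (\<rho> (eps k)) = 0 \<and> Delta2 (\<rho> (eps j)) (\<rho> (eps k)) (\<rho> (eps l)) = 0)"
    using assms(2,4) unfolding hom_def SL2C_def
    by (intro common_eigenvector_iff_sigma2_Delta2) auto
  finally show ?thesis .
qed

end
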